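(* Let $(\varrho_\varepsilon)_{\varepsilon\in(0,\bar\varepsilon)}$ be a family of normal states on $\mathcal{H}$ and $\mathfrak{C}>0$. Then $\mathrm{Tr}[\varrho_\varepsilon N_1^k]\le\mathfrak{C}^k$ for all $\varepsilon\in(0,\bar\varepsilon)$ and all $k\in\mathbb{N}$ if and only if for every $\varepsilon\in(0,\bar\varepsilon)$ there exist an orthonormal sequence $(\Psi_i(\varepsilon))_{i\in\mathbb{N}}$ in $\mathcal{H}$, each with non-zero components only in $\bigoplus_{n=0}^{[\mathfrak{C}/\varepsilon]}\mathcal{H}_n$, and a sequence $(\lambda_i(\varepsilon))_{i}\in\ell^1$ with each $\lambda_i(\varepsilon)>0$, such that $\varrho_\varepsilon=\sum_i\lambda_i(\varepsilon)|\Psi_i(\varepsilon)\rangle\langle\Psi_i(\varepsilon)|$.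
   Context: $\mathcal{H}=\Gamma_s(L^2(\mathbb{R}^3))\otimes\Gamma_s(L^2(\mathbb{R}^3))=\bigoplus_n\mathcal{H}_n$ with $\mathcal{H}_n=L^2(\mathbb{R}^3)^{\otimes_sn}\otimes\Gamma_s(L^2(\mathbb{R}^3))$; $N_1$ is the ($\varepsilon$-dependent) nucleon number operator, equal to $\varepsilon n$ on $\mathcal{H}_n$. $[\cdot]$ denotes integer part. *)

theory Defs
  imports "HOL-Analysis.Analysis"
begin

text \<open>Each H_n is an infinite-dimensional separable complex Hilbert space, so up to a
  grading-preserving unitary H is l2(nat x nat), where the basis vector e (n,m) is the
  m-th basis vector of the sector H_n.\<close>

type_synonym vec = "nat \<times> nat \<Rightarrow> complex"

definition l2 :: "vec set" where
  "l2 = {f. (\<lambda>a. (cmod (f a))^2) summable_on UNIV}"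

definition cinner :: "vec \<Rightarrow> vec \<Rightarrow> complex" where
  "cinner f g = (\<Sum>\<^sub>\<infinity>a. cnj (f a) * g a)"

definition l2norm :: "vec \<Rightarrow> real" where
  "l2norm f = sqrt (\<Sum>\<^sub>\<infinity>a. (cmod (f a))^2)"

definition basis :: "nat \<times> nat \<Rightarrow> vec" where
  "basis a = (\<lambda>b. if b = a then 1 else 0)"

text \<open>Bounded complex-linear operator on l2 (only its values on l2 matter).\<close>
definition bounded_op :: "(vec \<Rightarrow> vec) \<Rightarrow> bool" where
  "bounded_op T \<longleftrightarrow>
     (\<forall>x\<in>l2. T x \<in> l2) \<and>
     (\<forall>x\<in>l2. \<forall>y\<in>l2. \<forall>c::complex. T (\<lambda>a. x a + c * y a) = (\<lambda>a. T x a + c * T y a)) \<and>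
     (\<exists>K. \<forall>x\<in>l2. l2norm (T x) \<le> K * l2norm x)"

definition positive_op :: "(vec \<Rightarrow> vec) \<Rightarrow> bool" where
  "positive_op T \<longleftrightarrow> (\<forall>x\<in>l2. cinner x (T x) \<in> \<real> \<and> Re (cinner x (T x)) \<ge> 0)"

text \<open>Normal state: positive bounded operator of trace one (a positive operator with
  finite trace is trace class; its trace is the basis sum of diagonal entries).\<close>
definition normal_state :: "(vec \<Rightarrow> vec) \<Rightarrow> bool" where
  "normal_state \<rho> \<longleftrightarrow> bounded_op \<rho> \<and> positive_op \<rho> \<and>
     ((\<lambda>a. Re (cinner (basis a) (\<rho> (basis a)))) has_sum 1) UNIV"

text \<open>N_1 acts as eps * n on H_n, i.e. N_1 (basis (n,m)) = eps*n * basis (n,m).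
  Tr[rho N_1^k] (possibly infinite), computed in the eigenbasis of N_1.\<close>
definition moment :: "real \<Rightarrow> (vec \<Rightarrow> vec) \<Rightarrow> nat \<Rightarrow> ennreal" where
  "moment \<epsilon> \<rho> k = (\<Sum>\<^sub>\<infinity>a. ennreal ((\<epsilon> * real (fst a))^k * Re (cinner (basis a) (\<rho> (basis a)))))"

definition orthonormal_on :: "nat set \<Rightarrow> (nat \<Rightarrow> vec) \<Rightarrow> bool" where
  "orthonormal_on I \<Psi> \<longleftrightarrow> (\<forall>i\<in>I. \<Psi> i \<in> l2) \<and>
     (\<forall>i\<in>I. \<forall>j\<in>I. cinner (\<Psi> i) (\<Psi> j) = (if i = j then 1 else 0))"

end

theory Submission
  imports Defs
begin

text \<open>In the eigenbasis of the number operator, Tr[rho N^k] is the sum over basis vectors a of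
  (eps n_a)^k rho_aa. Hence all moments are bounded by C^k exactly when the diagonal of rho vanishes
  in the sectors n > C/eps: a single positive diagonal entry there contributes (eps n / C)^k C^k,
  which eventually exceeds C^k.

  The decomposition comes from the spectral theorem for the positive trace-class form
  (y, x) \<mapsto> <y, rho x>, proved by repeatedly maximizing the quadratic form on the unit sphere and
  removing the maximizer. The maximum is attained because a trace-class form is weakly sequentially
  continuous on bounded sets. The eigenvalues sum to at most the trace, so the residual forms tend
  to zero, and by Cauchy-Schwarz each eigenvector vanishes wherever the diagonal of rho does.\<close>

section \<open>Vectors in l2\<close>

lemma cmod_add_squared_le: "(cmod (u + v))^2 \<le> 2 * (cmod u)^2 + 2 * (cmod v)^2"
proof -
  have "(cmod (u + v))^2 \<le> (cmod u + cmod v)^2"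
    by (simp add: power_mono norm_triangle_ineq)
  also have "\<dots> \<le> 2 * (cmod u)^2 + 2 * (cmod v)^2"
    using sum_squares_bound[of "cmod u" "cmod v"] by (simp add: power2_sum)
  finally show ?thesis .
qed

lemma l2_lincomb: assumes "x \<in> l2" "y \<in> l2" shows "(\<lambda>a. x a + c * y a) \<in> l2"
proof -
  have "(\<lambda>a. 2 * (cmod (x a))^2 + 2 * (cmod c)^2 * (cmod (y a))^2) summable_on UNIV"
    using assms by (intro summable_on_add summable_on_cmult_right) (auto simp: l2_def)
  moreover have "(cmod (x a + c * y a))^2 \<le> 2 * (cmod (x a))^2 + 2 * (cmod c)^2 * (cmod (y a))^2" for a
    using cmod_add_squared_le[of "x a" "c * y a"] by (simp add: norm_mult power_mult_distrib)
  ultimately show ?thesis unfolding l2_def mem_Collect_eq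
    by (rule summable_on_comparison_test) auto
qed

lemma l2_zero [simp]: "(\<lambda>_. 0) \<in> l2"
  by (simp add: l2_def)

lemma l2_scale: "x \<in> l2 \<Longrightarrow> (\<lambda>a. c * x a) \<in> l2"
  using l2_lincomb[of "\<lambda>_. 0" x c] by simp

lemma l2_add: "x \<in> l2 \<Longrightarrow> y \<in> l2 \<Longrightarrow> (\<lambda>a. x a + y a) \<in> l2"
  using l2_lincomb[of x y 1] by simp

lemma l2_diff: "x \<in> l2 \<Longrightarrow> y \<in> l2 \<Longrightarrow> (\<lambda>a. x a - y a) \<in> l2"
  using l2_lincomb[of x y "-1"] by simp

lemma l2_finite_support: "finite {a. f a \<noteq> 0} \<Longrightarrow> f \<in> l2"
  unfolding l2_def mem_Collect_eq by (rule finite_nonzero_values_imp_summable_on) auto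

lemma l2_basis [simp]: "basis a \<in> l2"
  by (rule l2_finite_support) (simp add: basis_def)

lemma cinner_summable: assumes "x \<in> l2" "y \<in> l2"
  shows "(\<lambda>a. cnj (x a) * y a) summable_on UNIV"
proof (rule abs_summable_summable)
  have bound: "cmod (cnj (x a) * y a) \<le> (cmod (x a))^2 + (cmod (y a))^2" for a
    using sum_squares_bound[of "cmod (x a)" "cmod (y a)"]
      mult_nonneg_nonneg[OF norm_ge_zero norm_ge_zero, of "x a" "y a"]
    unfolding norm_mult complex_mod_cnj by linarith
  have "(\<lambda>a. (cmod (x a))^2 + (cmod (y a))^2) summable_on UNIV"
    using assms by (intro summable_on_add) (auto simp: l2_def)
  then show "(\<lambda>a. norm (cnj (x a) * y a)) summable_on UNIV"
    by (rule summable_on_comparison_test) (use bound in auto)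
qed

lemma cinner_lincomb_right: assumes "x \<in> l2" "y \<in> l2" "z \<in> l2"
  shows "cinner z (\<lambda>a. x a + c * y a) = cinner z x + c * cinner z y"
proof -
  have "cinner z (\<lambda>a. x a + c * y a) = (\<Sum>\<^sub>\<infinity>a. cnj (z a) * x a + c * (cnj (z a) * y a))"
    unfolding cinner_def by (simp add: algebra_simps)
  also have "\<dots> = cinner z x + c * cinner z y"
    unfolding cinner_def using assms
    by (subst infsum_add) (auto intro!: cinner_summable summable_on_cmult_right simp: infsum_cmult_right')
  finally show ?thesis .
qed

lemma cinner_cnj: "cinner y x = cnj (cinner x y)"
  unfolding cinner_def infsum_cnj[symmetric] by (simp add: mult.commute)

lemma cinner_lincomb_left: assumes "x \<in> l2" "y \<in> l2" "z \<in> l2"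
  shows "cinner (\<lambda>a. x a + c * y a) z = cinner x z + cnj c * cinner y z"
  using cinner_lincomb_right[OF assms, of c] by (subst (1 2 3) cinner_cnj) simp

lemma cinner_basis_left: "cinner (basis a) x = x a"
proof -
  have "cinner (basis a) x = infsum (\<lambda>_. x a) {a}"
    unfolding cinner_def by (rule infsum_cong_neutral) (auto simp: basis_def)
  then show ?thesis by simp
qed

lemma cinner_basis_right: "cinner x (basis a) = cnj (x a)"
  using cinner_basis_left[of a x] cinner_cnj[of x "basis a"] by simp

definition sqnorm :: "vec \<Rightarrow> real" where
  "sqnorm x = (\<Sum>\<^sub>\<infinity>a. (cmod (x a))^2)"

lemma sqnorm_summable: "x \<in> l2 \<Longrightarrow> (\<lambda>a. (cmod (x a))^2) summable_on UNIV"
  by (simp add: l2_def)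

lemma sqnorm_nonneg: "0 \<le> sqnorm x"
  unfolding sqnorm_def by (rule infsum_nonneg) simp

lemma l2norm_eq_sqrt_sqnorm: "l2norm x = sqrt (sqnorm x)"
  by (simp add: l2norm_def sqnorm_def)

lemma l2norm_nonneg: "0 \<le> l2norm x"
  by (simp add: l2norm_eq_sqrt_sqnorm sqnorm_nonneg)

lemma cinner_self: assumes "x \<in> l2" shows "cinner x x = complex_of_real (sqnorm x)"
proof -
  have "cinner x x = (\<Sum>\<^sub>\<infinity>a. complex_of_real ((cmod (x a))^2))"
    unfolding cinner_def by (intro infsum_cong) (metis complex_norm_square of_real_power mult.commute)
  also have "\<dots> = complex_of_real (sqnorm x)"
    unfolding sqnorm_def using sqnorm_summable[OF assms]
    by (intro infsumI has_sum_of_real has_sum_infsum)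
  finally show ?thesis .
qed

lemma sqnorm_coordinate_le: "x \<in> l2 \<Longrightarrow> (cmod (x a))^2 \<le> sqnorm x"
  unfolding sqnorm_def using finite_sum_le_infsum[OF sqnorm_summable, of x "{a}"] by simp

section \<open>Positive Hermitian forms on l2\<close>

lemma discriminant_le_if_nonneg:
  fixes A B k :: real
  assumes "0 \<le> B" "\<And>t. 0 \<le> A - 2 * t * k + t^2 * k * B"
  shows "k \<le> B * A"
proof (cases "B = 0")
  case True
  show ?thesis
  proof (rule ccontr)
    assume "\<not> k \<le> B * A"
    then have "k > 0" using True by simp
    have "0 \<le> A - 2 * ((A + 1) / (2 * k)) * k" using assms(2)[of "(A + 1) / (2 * k)"] True by simp
    also have "\<dots> = -1" using \<open>k > 0\<close> by (simp add: field_simps)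
    finally show False by simp
  qed
next
  case False
  then have "B > 0" using assms by simp
  have "0 \<le> A - 2 * (1 / B) * k + (1 / B)^2 * k * B" by (rule assms(2))
  also have "\<dots> = A - k / B" using \<open>B > 0\<close> by (simp add: field_simps power2_eq_square)
  finally show ?thesis using \<open>B > 0\<close> by (simp add: field_simps mult.commute)
qed

definition pos_form :: "(vec \<Rightarrow> vec \<Rightarrow> complex) \<Rightarrow> bool" where
  "pos_form F \<longleftrightarrow>
     (\<forall>x\<in>l2. \<forall>y\<in>l2. \<forall>z\<in>l2. \<forall>c. F z (\<lambda>a. x a + c * y a) = F z x + c * F z y) \<and>
     (\<forall>x\<in>l2. \<forall>y\<in>l2. F x y = cnj (F y x)) \<and> (\<forall>x\<in>l2. 0 \<le> Re (F x x))"

definition quad :: "(vec \<Rightarrow> vec \<Rightarrow> complex) \<Rightarrow> vec \<Rightarrow> real" where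
  "quad F x = Re (F x x)"

definition seminorm :: "(vec \<Rightarrow> vec \<Rightarrow> complex) \<Rightarrow> vec \<Rightarrow> real" where
  "seminorm F x = sqrt (quad F x)"

definition diag :: "(vec \<Rightarrow> vec \<Rightarrow> complex) \<Rightarrow> nat \<times> nat \<Rightarrow> real" where
  "diag F a = quad F (basis a)"

context
  fixes F :: "vec \<Rightarrow> vec \<Rightarrow> complex"
  assumes F: "pos_form F"
begin

lemma pos_form_lincomb_right:
  "x \<in> l2 \<Longrightarrow> y \<in> l2 \<Longrightarrow> z \<in> l2 \<Longrightarrow> F z (\<lambda>a. x a + c * y a) = F z x + c * F z y"
  using F unfolding pos_form_def by blast

lemma pos_form_hermitian: "x \<in> l2 \<Longrightarrow> y \<in> l2 \<Longrightarrow> F x y = cnj (F y x)"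
  using F unfolding pos_form_def by blast

lemma quad_nonneg: "x \<in> l2 \<Longrightarrow> 0 \<le> quad F x"
  using F unfolding pos_form_def quad_def by blast

lemma diag_nonneg: "0 \<le> diag F a"
  unfolding diag_def by (simp add: quad_nonneg)

lemma pos_form_self: assumes "x \<in> l2" shows "F x x = complex_of_real (quad F x)"
proof -
  have "Im (F x x) = 0"
    using arg_cong[OF pos_form_hermitian[OF assms assms], of Im] by simp
  then show ?thesis by (simp add: quad_def complex_eq_iff)
qed

lemma pos_form_zero_right: "z \<in> l2 \<Longrightarrow> F z (\<lambda>_. 0) = 0"
  using pos_form_lincomb_right[OF l2_zero l2_zero, of z 1] by simp

lemma pos_form_lincomb_left:
  assumes "x \<in> l2" "y \<in> l2" "z \<in> l2"
  shows "F (\<lambda>a. x a + c * y a) z = F x z + cnj c * F y z"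
proof -
  have "F (\<lambda>a. x a + c * y a) z = cnj (F z (\<lambda>a. x a + c * y a))"
    using assms by (intro pos_form_hermitian l2_lincomb)
  also have "\<dots> = F x z + cnj c * F y z"
    using assms by (simp add: pos_form_lincomb_right pos_form_hermitian[of z x] pos_form_hermitian[of z y])
  finally show ?thesis .
qed

lemma quad_lincomb: assumes "x \<in> l2" "y \<in> l2"
  shows "quad F (\<lambda>a. x a + s * y a) = quad F x + 2 * Re (s * F x y) + (cmod s)^2 * quad F y"
proof -
  have "F (\<lambda>a. x a + s * y a) (\<lambda>a. x a + s * y a)
      = F x x + s * F x y + cnj s * F y x + cnj s * s * F y y"
    using assms by (simp add: pos_form_lincomb_left l2_lincomb pos_form_lincomb_right algebra_simps)
  also have "\<dots> = quad F x + (s * F x y + cnj (s * F x y)) + (cmod s)^2 * quad F y"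
  proof -
    have "cnj s * s = complex_of_real ((cmod s)^2)" by (metis complex_norm_square mult.commute)
    then show ?thesis using assms by (simp add: pos_form_self pos_form_hermitian[of y x])
  qed
  finally show ?thesis
    unfolding quad_def by (simp add: complex_add_cnj)
qed

lemma quad_scale: "x \<in> l2 \<Longrightarrow> quad F (\<lambda>a. c * x a) = (cmod c)^2 * quad F x"
  using quad_lincomb[OF l2_zero, of x c] pos_form_zero_right[OF l2_zero]
    pos_form_hermitian[OF l2_zero, of x] pos_form_zero_right[of x]
  by (simp add: quad_def)

lemma seminorm_sq: "x \<in> l2 \<Longrightarrow> (seminorm F x)^2 = quad F x"
  unfolding seminorm_def by (rule real_sqrt_pow2[OF quad_nonneg])

lemma seminorm_nonneg: "x \<in> l2 \<Longrightarrow> 0 \<le> seminorm F x"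
  by (simp add: seminorm_def quad_nonneg)

text \<open>The real quadratic t \<mapsto> quad F (x - t F(y,x) y) is nonnegative, so its discriminant is not
  positive.\<close>
lemma pos_form_Cauchy_Schwarz: assumes "x \<in> l2" "y \<in> l2"
  shows "cmod (F y x) \<le> seminorm F y * seminorm F x"
proof -
  define c where "c = cmod (F y x)"
  have nonneg: "0 \<le> quad F x - 2 * t * c^2 + t^2 * c^2 * quad F y" for t :: real
  proof -
    define s where "s = - (complex_of_real t * F y x)"
    have "F y x * cnj (F y x) = complex_of_real (c^2)"
      unfolding c_def by (rule complex_norm_square[symmetric])
    then have "s * F x y = - complex_of_real (t * c^2)"
      unfolding s_def pos_form_hermitian[OF assms] by (simp add: mult.assoc)
    moreover have "(cmod s)^2 = t^2 * c^2"
      unfolding s_def c_def by (simp add: norm_mult power_mult_distrib)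
    moreover have "0 \<le> quad F (\<lambda>a. x a + s * y a)"
      by (intro quad_nonneg l2_lincomb assms)
    ultimately show ?thesis
      unfolding quad_lincomb[OF assms] by simp
  qed
  have "c^2 \<le> quad F y * quad F x"
    using nonneg quad_nonneg assms by (intro discriminant_le_if_nonneg) auto
  then have "c^2 \<le> (seminorm F y * seminorm F x)^2"
    by (simp add: power_mult_distrib seminorm_sq assms)
  then show ?thesis
    unfolding c_def by (rule power2_le_imp_le) (simp add: seminorm_nonneg assms)
qed

lemma seminorm_triangle: assumes "x \<in> l2" "y \<in> l2"
  shows "seminorm F (\<lambda>a. x a + y a) \<le> seminorm F x + seminorm F y"
proof -
  have "Re (F x y) \<le> seminorm F x * seminorm F y"
    using order_trans[OF complex_Re_le_cmod pos_form_Cauchy_Schwarz[OF assms(2,1)]] .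
  moreover have "(seminorm F (\<lambda>a. x a + y a))^2 = quad F x + 2 * Re (F x y) + quad F y"
    using seminorm_sq[OF l2_add[OF assms]] quad_lincomb[OF assms, of 1] by simp
  ultimately have "(seminorm F (\<lambda>a. x a + y a))^2 \<le> (seminorm F x + seminorm F y)^2"
    unfolding power2_sum seminorm_sq[OF assms(1)] seminorm_sq[OF assms(2)] by linarith
  then show ?thesis
    by (rule power2_le_imp_le) (simp add: seminorm_nonneg assms)
qed

lemma seminorm_scale: "x \<in> l2 \<Longrightarrow> seminorm F (\<lambda>a. c * x a) = cmod c * seminorm F x"
  by (simp add: seminorm_def quad_scale real_sqrt_mult)

end

lemma pos_form_cinner: "pos_form cinner"
  unfolding pos_form_def
proof (intro conjI ballI allI)
  show "cinner x y = cnj (cinner y x)" for x y by (rule cinner_cnj)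
qed (simp_all add: cinner_lincomb_right cinner_self sqnorm_nonneg)

lemma quad_cinner: "x \<in> l2 \<Longrightarrow> quad cinner x = sqnorm x"
  by (simp add: quad_def cinner_self)

lemma seminorm_cinner: "x \<in> l2 \<Longrightarrow> seminorm cinner x = l2norm x"
  by (simp add: seminorm_def quad_cinner l2norm_eq_sqrt_sqnorm)

lemma cinner_Cauchy_Schwarz: "x \<in> l2 \<Longrightarrow> y \<in> l2 \<Longrightarrow> cmod (cinner y x) \<le> l2norm y * l2norm x"
  using pos_form_Cauchy_Schwarz[OF pos_form_cinner] by (simp add: seminorm_cinner)

lemma sqnorm_scale: "x \<in> l2 \<Longrightarrow> sqnorm (\<lambda>a. c * x a) = (cmod c)^2 * sqnorm x"
  using quad_scale[OF pos_form_cinner] by (simp add: quad_cinner[symmetric] l2_scale)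

text \<open>Polarization: compare the diagonal at x + y and at x + i y.\<close>
lemma hermitian_if_real_diagonal:
  assumes lin_right: "\<And>x y z c. x \<in> l2 \<Longrightarrow> y \<in> l2 \<Longrightarrow> z \<in> l2 \<Longrightarrow> G z (\<lambda>a. x a + c * y a) = G z x + c * G z y"
    and lin_left: "\<And>x y z c. x \<in> l2 \<Longrightarrow> y \<in> l2 \<Longrightarrow> z \<in> l2 \<Longrightarrow> G (\<lambda>a. x a + c * y a) z = G x z + cnj c * G y z"
    and real: "\<And>u. u \<in> l2 \<Longrightarrow> Im (G u u) = 0"
    and "x \<in> l2" "y \<in> l2"
  shows "G x y = cnj (G y x)"
proof -
  have expand: "G (\<lambda>a. x a + s * y a) (\<lambda>a. x a + s * y a)
      = G x x + s * G x y + cnj s * G y x + cnj s * s * G y y" for s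
  proof -
    have "(\<lambda>a. x a + s * y a) \<in> l2" using assms(4,5) by (rule l2_lincomb)
    then have "G (\<lambda>a. x a + s * y a) (\<lambda>a. x a + s * y a)
        = G x (\<lambda>a. x a + s * y a) + cnj s * G y (\<lambda>a. x a + s * y a)"
      using lin_left assms(4,5) by blast
    also have "\<dots> = (G x x + s * G x y) + cnj s * (G y x + s * G y y)"
      using lin_right assms(4,5) by metis
    finally show ?thesis by (simp add: algebra_simps)
  qed
  have "Im (G x y + G y x) = 0"
    using expand[of 1] real[OF l2_lincomb[OF assms(4,5), of 1]] real assms(4,5) by simp
  moreover have "Re (G x y) - Re (G y x) = 0"
    using expand[of \<i>] real[OF l2_lincomb[OF assms(4,5), of \<i>]] real assms(4,5) by simp
  ultimately show ?thesis by (simp add: complex_eq_iff)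
qed

section \<open>Trace-class forms\<close>

definition trace_class_form :: "(vec \<Rightarrow> vec \<Rightarrow> complex) \<Rightarrow> real \<Rightarrow> real \<Rightarrow> bool" where
  "trace_class_form F K t \<longleftrightarrow>
     pos_form F \<and> (\<forall>x\<in>l2. quad F x \<le> K * sqnorm x) \<and> (diag F has_sum t) UNIV"

lemma trace_class_form_pos_form: "trace_class_form F K t \<Longrightarrow> pos_form F"
  by (simp add: trace_class_form_def)

lemma trace_class_form_bounded: "trace_class_form F K t \<Longrightarrow> x \<in> l2 \<Longrightarrow> quad F x \<le> K * sqnorm x"
  by (simp add: trace_class_form_def)

lemma trace_class_form_diag_summable: "trace_class_form F K t \<Longrightarrow> diag F summable_on UNIV"
  by (auto simp: trace_class_form_def has_sum_imp_summable)

lemma infsum_Compl_finite: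
  fixes f :: "'a \<Rightarrow> real"
  assumes "f summable_on UNIV" "finite G"
  shows "f summable_on (- G)" "infsum f (- G) = infsum f UNIV - sum f G"
  using summable_on_Diff[OF assms(1), of G] infsum_Diff[OF assms(1), of G] assms(2)
  by (simp_all add: Compl_eq_Diff_UNIV summable_on_finite)

lemma mult_le_weighted_squares:
  fixes x y d :: real
  assumes "d > 0"
  shows "x * y \<le> (d / 2) * x^2 + (1 / (2 * d)) * y^2"
proof -
  have "(d / 2) * x^2 + (1 / (2 * d)) * y^2 - x * y = (d * x - y)^2 / (2 * d)"
    using assms by (simp add: field_simps power2_eq_square)
  moreover have "(d * x - y)^2 / (2 * d) \<ge> 0" using assms by simp
  ultimately show ?thesis by linarith
qed

definition restrict_vec :: "(nat \<times> nat) set \<Rightarrow> vec \<Rightarrow> vec" where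
  "restrict_vec G w = (\<lambda>a. if a \<in> G then w a else 0)"

lemma restrict_vec_l2: "finite G \<Longrightarrow> restrict_vec G w \<in> l2"
  by (rule l2_finite_support) (auto simp: restrict_vec_def elim: finite_subset[rotated])

lemma sqnorm_restrict_vec_remainder_small:
  assumes "w \<in> l2" "e > 0"
  obtains G where "finite G" "sqnorm (\<lambda>a. w a - restrict_vec G w a) \<le> e"
proof -
  obtain G where G: "finite G" "dist (sum (\<lambda>a. (cmod (w a))^2) G) (sqnorm w) \<le> e"
    using infsum_finite_approximation[OF sqnorm_summable[OF assms(1)] assms(2)]
    unfolding sqnorm_def by auto
  have "sqnorm (\<lambda>a. w a - restrict_vec G w a) = infsum (\<lambda>a. (cmod (w a))^2) (- G)"
    unfolding sqnorm_def by (rule infsum_cong_neutral) (auto simp: restrict_vec_def)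
  also have "\<dots> = sqnorm w - sum (\<lambda>a. (cmod (w a))^2) G"
    using infsum_Compl_finite[OF sqnorm_summable[OF assms(1)] G(1)] by (simp add: sqnorm_def)
  finally show ?thesis using that G by (simp add: dist_real_def)
qed

context
  fixes F :: "vec \<Rightarrow> vec \<Rightarrow> complex"
  assumes F: "pos_form F"
begin

lemma seminorm_restrict_vec_le:
  "finite G \<Longrightarrow> seminorm F (restrict_vec G w) \<le> (\<Sum>a\<in>G. cmod (w a) * sqrt (diag F a))"
proof (induction G rule: finite_induct)
  case empty
  have "restrict_vec {} w = (\<lambda>_. 0)" by (simp add: restrict_vec_def)
  then show ?case using pos_form_zero_right[OF F l2_zero] by (simp add: seminorm_def quad_def)
next
  case (insert b G)
  have "restrict_vec (insert b G) w = (\<lambda>a. restrict_vec G w a + w b * basis b a)"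
    using insert(2) by (auto simp: restrict_vec_def basis_def)
  then have "seminorm F (restrict_vec (insert b G) w)
      \<le> seminorm F (restrict_vec G w) + seminorm F (\<lambda>a. w b * basis b a)"
    using seminorm_triangle[OF F restrict_vec_l2[OF insert(1)] l2_scale[OF l2_basis]] by simp
  also have "seminorm F (\<lambda>a. w b * basis b a) = cmod (w b) * sqrt (diag F b)"
    unfolding seminorm_scale[OF F l2_basis] by (simp add: seminorm_def diag_def)
  finally show ?case using insert by (simp add: add.commute)
qed

text \<open>The weights sqrt (diag F a) are square-summable, so this weighted l1 norm has uniformly small
  tails on bounded sets; it dominates the seminorm of a trace-class form.\<close>
definition diag_majorant :: "vec \<Rightarrow> real" where
  "diag_majorant w = (\<Sum>\<^sub>\<infinity>a. cmod (w a) * sqrt (diag F a))"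

lemma diag_majorant_summable:
  assumes "diag F summable_on UNIV" "w \<in> l2"
  shows "(\<lambda>a. cmod (w a) * sqrt (diag F a)) summable_on UNIV"
proof -
  have bound: "cmod (w a) * sqrt (diag F a) \<le> (cmod (w a))^2 + diag F a" for a
  proof -
    have "2 * (cmod (w a) * sqrt (diag F a)) \<le> (cmod (w a))^2 + (sqrt (diag F a))^2"
      using sum_squares_bound[of "cmod (w a)" "sqrt (diag F a)"] by (simp add: mult.assoc)
    moreover have "0 \<le> cmod (w a) * sqrt (diag F a)" using diag_nonneg[OF F, of a] by simp
    ultimately show ?thesis using real_sqrt_pow2[OF diag_nonneg[OF F, of a]] by linarith
  qed
  have "(\<lambda>a. (cmod (w a))^2 + diag F a) summable_on UNIV"
    using assms by (intro summable_on_add sqnorm_summable)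
  then show ?thesis
    by (rule summable_on_comparison_test) (use bound diag_nonneg[OF F] in auto)
qed

lemma diag_majorant_nonneg: "0 \<le> diag_majorant w"
  unfolding diag_majorant_def by (rule infsum_nonneg) (simp add: diag_nonneg[OF F])

lemma seminorm_le_diag_majorant:
  assumes "trace_class_form F K t" "w \<in> l2"
  shows "seminorm F w \<le> diag_majorant w"
proof (rule field_le_epsilon)
  fix e :: real assume e: "e > 0"
  have "e^2 / (\<bar>K\<bar> + 1) > 0" using e by simp
  then obtain G where G: "finite G" "sqnorm (\<lambda>a. w a - restrict_vec G w a) \<le> e^2 / (\<bar>K\<bar> + 1)"
    using sqnorm_restrict_vec_remainder_small[OF assms(2)] by blast
  define r where "r = (\<lambda>a. w a - restrict_vec G w a)"
  have r: "r \<in> l2" unfolding r_def by (rule l2_diff[OF assms(2) restrict_vec_l2[OF G(1)]])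
  have "seminorm F w \<le> seminorm F (restrict_vec G w) + seminorm F r"
    using seminorm_triangle[OF F restrict_vec_l2[OF G(1)] r, of w] unfolding r_def by simp
  also have "seminorm F (restrict_vec G w) \<le> (\<Sum>a\<in>G. cmod (w a) * sqrt (diag F a))"
    by (rule seminorm_restrict_vec_le[OF G(1)])
  also have "\<dots> \<le> diag_majorant w"
    unfolding diag_majorant_def
    using diag_majorant_summable[OF trace_class_form_diag_summable[OF assms(1)] assms(2)]
    by (rule finite_sum_le_infsum[OF _ G(1)]) (auto intro!: mult_nonneg_nonneg diag_nonneg[OF F])
  also have "seminorm F r \<le> e"
  proof (rule power2_le_imp_le)
    have "(seminorm F r)^2 \<le> K * sqnorm r"
      using trace_class_form_bounded[OF assms(1) r] seminorm_sq[OF F r] by simp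
    also have "\<dots> \<le> (\<bar>K\<bar> + 1) * (e^2 / (\<bar>K\<bar> + 1))"
      using G(2) sqnorm_nonneg[of r] unfolding r_def by (intro mult_mono) auto
    finally show "(seminorm F r)^2 \<le> e^2" by simp
  qed (use e in simp)
  finally show "seminorm F w \<le> diag_majorant w + e" by simp
qed

lemma diag_majorant_le_split:
  assumes "diag F summable_on UNIV" "w \<in> l2" "finite G" "d > 0"
  shows "diag_majorant w \<le> (\<Sum>a\<in>G. cmod (w a) * sqrt (diag F a))
    + d / 2 * sqnorm w + 1 / (2 * d) * infsum (diag F) (- G)"
proof -
  define f where "f = (\<lambda>a. cmod (w a) * sqrt (diag F a))"
  define g where "g a = d / 2 * (cmod (w a))^2 + 1 / (2 * d) * diag F a" for a
  have f: "f summable_on UNIV" unfolding f_def by (rule diag_majorant_summable[OF assms(1,2)])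
  have w: "(\<lambda>a. (cmod (w a))^2) summable_on UNIV" by (rule sqnorm_summable[OF assms(2)])
  have g: "g summable_on UNIV"
    unfolding g_def using w assms(1) by (intro summable_on_add summable_on_cmult_right)
  have "diag_majorant w = sum f G + infsum f (- G)"
    using infsum_Compl_finite(2)[OF f assms(3)] unfolding diag_majorant_def f_def by linarith
  also have "infsum f (- G) \<le> infsum g (- G)"
  proof (rule infsum_mono)
    show "f a \<le> g a" for a
      using mult_le_weighted_squares[OF assms(4), of "cmod (w a)" "sqrt (diag F a)"]
        diag_nonneg[OF F, of a] by (simp add: f_def g_def)
  qed (use infsum_Compl_finite(1)[OF f assms(3)] infsum_Compl_finite(1)[OF g assms(3)] in auto)
  also have "infsum g (- G)
      = d / 2 * infsum (\<lambda>a. (cmod (w a))^2) (- G) + 1 / (2 * d) * infsum (diag F) (- G)"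
    unfolding g_def infsum_cmult_right'[symmetric]
    using infsum_Compl_finite(1)[OF w assms(3)] infsum_Compl_finite(1)[OF assms(1,3)]
    by (intro infsum_add summable_on_cmult_right)
  also have "infsum (\<lambda>a. (cmod (w a))^2) (- G) \<le> sqnorm w"
    using infsum_Compl_finite(2)[OF w assms(3)] by (simp add: sqnorm_def sum_nonneg)
  finally show ?thesis
    using assms(4) by (simp add: f_def mult_left_mono)
qed

lemma diag_majorant_tendsto_zero:
  assumes "trace_class_form F K t" "\<And>k. u k \<in> l2" "\<And>k. sqnorm (u k) \<le> B"
    and "\<And>a. (\<lambda>k. u k a) \<longlonglongrightarrow> 0"
  shows "(\<lambda>k. diag_majorant (u k)) \<longlonglongrightarrow> 0"
proof (rule tendstoI)
  fix e :: real assume e: "e > 0"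
  have diag: "(diag F has_sum t) UNIV" using assms(1) by (simp add: trace_class_form_def)
  define d where "d = e / (2 * (\<bar>B\<bar> + 1))"
  have d: "d > 0" using e by (simp add: d_def)
  have "d / 2 * B \<le> d / 2 * (\<bar>B\<bar> + 1)" using d by (intro mult_left_mono) auto
  also have "\<dots> = e / 4" using e by (simp add: d_def field_simps)
  finally have dB: "d / 2 * B \<le> e / 4" .
  obtain G where G: "finite G" "dist (sum (diag F) G) t \<le> d * e / 2"
    using has_sum_finite_approximation[OF diag, of "d * e / 2"] d e by auto
  have "1 / (2 * d) * infsum (diag F) (- G) \<le> 1 / (2 * d) * (d * e / 2)"
    using infsum_Compl_finite(2)[OF has_sum_imp_summable[OF diag] G(1)] G(2) infsumI[OF diag] d
    by (intro mult_left_mono) (auto simp: dist_real_def abs_if split: if_splits)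
  then have tail: "1 / (2 * d) * infsum (diag F) (- G) \<le> e / 4" using d by simp
  have "(\<lambda>k. \<Sum>a\<in>G. cmod (u k a) * sqrt (diag F a)) \<longlonglongrightarrow> 0"
    by (intro tendsto_null_sum tendsto_mult_left_zero tendsto_norm_zero assms(4))
  then have "\<forall>\<^sub>F k in sequentially. (\<Sum>a\<in>G. cmod (u k a) * sqrt (diag F a)) < e / 2"
    using e by (auto dest!: tendstoD[of _ 0 _ "e / 2"] elim!: eventually_mono simp: dist_real_def)
  then show "\<forall>\<^sub>F k in sequentially. dist (diag_majorant (u k)) 0 < e"
  proof (rule eventually_mono)
    fix k
    assume "(\<Sum>a\<in>G. cmod (u k a) * sqrt (diag F a)) < e / 2"
    moreover have "d / 2 * sqnorm (u k) \<le> d / 2 * B" using assms(3)[of k] d by simp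
    ultimately have "diag_majorant (u k) < e"
      using diag_majorant_le_split[OF has_sum_imp_summable[OF diag] assms(2) G(1) d, of k] dB tail
      by linarith
    then show "dist (diag_majorant (u k)) 0 < e"
      using diag_majorant_nonneg[of "u k"] by (simp add: dist_real_def)
  qed
qed

lemma quad_tendsto_zero:
  assumes "trace_class_form F K t" "\<And>k. u k \<in> l2" "\<And>k. sqnorm (u k) \<le> B"
    and "\<And>a. (\<lambda>k. u k a) \<longlonglongrightarrow> 0"
  shows "(\<lambda>k. quad F (u k)) \<longlonglongrightarrow> 0"
proof (rule tendsto_sandwich[where f="\<lambda>_. 0" and h="\<lambda>k. (diag_majorant (u k))^2"])
  show "\<forall>\<^sub>F k in sequentially. 0 \<le> quad F (u k)"
    by (simp add: quad_nonneg[OF F] assms(2))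
  have "quad F (u k) \<le> (diag_majorant (u k))^2" for k
    using seminorm_le_diag_majorant[OF assms(1,2)] seminorm_nonneg[OF F assms(2)]
    by (simp add: seminorm_sq[OF F assms(2), symmetric] power_mono)
  then show "\<forall>\<^sub>F k in sequentially. quad F (u k) \<le> (diag_majorant (u k))^2" by simp
  show "(\<lambda>k. (diag_majorant (u k))^2) \<longlonglongrightarrow> 0"
    using tendsto_power[OF diag_majorant_tendsto_zero[OF assms], of 2] by simp
qed simp

end

section \<open>The largest eigenvalue of a trace-class form\<close>

lemma bounded_seq_pointwise_convergent_subseq:
  fixes x :: "nat \<Rightarrow> 'i::countable \<Rightarrow> 'b::{real_normed_vector, heine_borel}"
  assumes "\<And>k a. norm (x k a) \<le> B"
  obtains r y where "strict_mono r" "\<And>a. (\<lambda>k. x (r k) a) \<longlonglongrightarrow> y a"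
proof -
  define S :: "('i \<Rightarrow> 'b) set" where "S = PiE UNIV (\<lambda>_. cball 0 B)"
  have "compactin (product_topology (\<lambda>_. euclidean) UNIV) S"
    unfolding S_def by (subst compactin_PiE) auto
  then have "seq_compact S"
    by (simp add: euclidean_product_topology compactin_euclidean_iff compact_imp_seq_compact)
  moreover have "\<forall>k. x k \<in> S" using assms by (auto simp: S_def)
  ultimately obtain y r where r: "strict_mono r" "(x \<circ> r) \<longlonglongrightarrow> y"
    unfolding seq_compact_def by blast
  have "(\<lambda>k. x (r k) a) \<longlonglongrightarrow> y a" for a
  proof -
    have "isCont (\<lambda>f. f a) y"
      using continuous_on_product_coordinates[of a] continuous_on_eq_continuous_at open_UNIV by blast
    from isCont_tendsto_compose[OF this r(2)] show ?thesis by (simp add: o_def)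
  qed
  with r that show ?thesis by blast
qed

lemma pointwise_limit_l2:
  assumes "\<And>k. x k \<in> l2" "\<And>k. sqnorm (x k) \<le> B" "\<And>a. (\<lambda>k. x k a) \<longlonglongrightarrow> y a"
  shows "y \<in> l2" "sqnorm y \<le> B"
proof -
  have partial_sums: "(\<Sum>a\<in>G. (cmod (y a))^2) \<le> B" if "finite G" for G
  proof (rule tendsto_upperbound)
    show "(\<lambda>k. \<Sum>a\<in>G. (cmod (x k a))^2) \<longlonglongrightarrow> (\<Sum>a\<in>G. (cmod (y a))^2)"
      by (intro tendsto_sum tendsto_power tendsto_norm assms(3))
    have "(\<Sum>a\<in>G. (cmod (x k a))^2) \<le> sqnorm (x k)" for k
      unfolding sqnorm_def by (rule finite_sum_le_infsum[OF sqnorm_summable[OF assms(1)] that]) auto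
    then show "\<forall>\<^sub>F k in sequentially. (\<Sum>a\<in>G. (cmod (x k a))^2) \<le> B"
      using assms(2) order_trans by (intro always_eventually allI) blast
  qed simp
  show l2: "y \<in> l2" unfolding l2_def mem_Collect_eq
    by (rule nonneg_bdd_above_summable_on) (auto intro!: bdd_aboveI2 partial_sums)
  show "sqnorm y \<le> B" unfolding sqnorm_def
    by (rule infsum_le_finite_sums[OF sqnorm_summable[OF l2]]) (simp add: partial_sums)
qed

lemma sqnorm_diff_le:
  assumes "x \<in> l2" "y \<in> l2"
  shows "sqnorm (\<lambda>a. x a - y a) \<le> 2 * sqnorm x + 2 * sqnorm y"
proof -
  have "sqnorm (\<lambda>a. x a - y a) \<le> (\<Sum>\<^sub>\<infinity>a. 2 * (cmod (x a))^2 + 2 * (cmod (y a))^2)"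
    unfolding sqnorm_def
    using cmod_add_squared_le[of "x _" "- y _"] sqnorm_summable[OF l2_diff[OF assms]]
      sqnorm_summable[OF assms(1)] sqnorm_summable[OF assms(2)]
    by (intro infsum_mono summable_on_add summable_on_cmult_right) auto
  also have "\<dots> = 2 * sqnorm x + 2 * sqnorm y"
    unfolding sqnorm_def infsum_cmult_right'[symmetric]
    using sqnorm_summable[OF assms(1)] sqnorm_summable[OF assms(2)]
    by (intro infsum_add summable_on_cmult_right)
  finally show ?thesis .
qed

lemma quad_tendsto_if_pointwise:
  assumes tc: "trace_class_form F K t"
    and x: "\<And>k. x k \<in> l2" "\<And>k. sqnorm (x k) \<le> B"
    and y: "y \<in> l2" "\<And>a. (\<lambda>k. x k a) \<longlonglongrightarrow> y a"
  shows "(\<lambda>k. quad F (x k)) \<longlonglongrightarrow> quad F y"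
proof -
  have F: "pos_form F" using tc by (rule trace_class_form_pos_form)
  define u where "u k = (\<lambda>a. x k a - y a)" for k
  have u: "u k \<in> l2" for k unfolding u_def by (rule l2_diff[OF x(1) y(1)])
  have "sqnorm (u k) \<le> 2 * B + 2 * sqnorm y" for k
    using sqnorm_diff_le[OF x(1) y(1), of k] x(2)[of k] unfolding u_def by linarith
  moreover have "(\<lambda>k. u k a) \<longlonglongrightarrow> 0" for a
    unfolding u_def using tendsto_diff[OF y(2)[of a] tendsto_const[of "y a"]] by simp
  ultimately have quad_u: "(\<lambda>k. quad F (u k)) \<longlonglongrightarrow> 0"
    by (rule quad_tendsto_zero[OF F tc u])
  have cross: "(\<lambda>k. Re (F y (u k))) \<longlonglongrightarrow> 0"
  proof (rule Lim_null_comparison)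
    show "\<forall>\<^sub>F k in sequentially. norm (Re (F y (u k))) \<le> seminorm F y * seminorm F (u k)"
      using order_trans[OF abs_Re_le_cmod pos_form_Cauchy_Schwarz[OF F u y(1)]] by simp
    have "(\<lambda>k. seminorm F (u k)) \<longlonglongrightarrow> 0"
      unfolding seminorm_def using tendsto_real_sqrt[OF quad_u] by simp
    then show "(\<lambda>k. seminorm F y * seminorm F (u k)) \<longlonglongrightarrow> 0"
      by (rule tendsto_mult_right_zero)
  qed
  have "quad F (x k) = quad F y + 2 * Re (F y (u k)) + quad F (u k)" for k
    using quad_lincomb[OF F y(1) u, of 1] unfolding u_def by simp
  moreover have "(\<lambda>k. quad F y + 2 * Re (F y (u k)) + quad F (u k)) \<longlonglongrightarrow> quad F y + 2 * 0 + 0"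
    by (intro tendsto_intros cross quad_u)
  ultimately show ?thesis by simp
qed

definition top_eigenvalue :: "(vec \<Rightarrow> vec \<Rightarrow> complex) \<Rightarrow> real" where
  "top_eigenvalue F = Sup {quad F x | x. x \<in> l2 \<and> sqnorm x \<le> 1}"

context
  fixes F :: "vec \<Rightarrow> vec \<Rightarrow> complex" and K t :: real
  assumes tc: "trace_class_form F K t"
begin

lemma trace_class_form_unit_quad_bdd_above: "bdd_above {quad F x | x. x \<in> l2 \<and> sqnorm x \<le> 1}"
proof (rule bdd_aboveI)
  fix z assume "z \<in> {quad F x | x. x \<in> l2 \<and> sqnorm x \<le> 1}"
  then obtain x where "z = quad F x" "x \<in> l2" "sqnorm x \<le> 1" by blast
  moreover have "K * sqnorm x \<le> \<bar>K\<bar> * 1"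
    using \<open>sqnorm x \<le> 1\<close> sqnorm_nonneg[of x] by (intro mult_mono) auto
  ultimately show "z \<le> \<bar>K\<bar>" using trace_class_form_bounded[OF tc] by force
qed

lemma quad_le_top_eigenvalue_unit: "x \<in> l2 \<Longrightarrow> sqnorm x \<le> 1 \<Longrightarrow> quad F x \<le> top_eigenvalue F"
  unfolding top_eigenvalue_def by (rule cSup_upper[OF _ trace_class_form_unit_quad_bdd_above]) auto

lemma top_eigenvalue_nonneg: "0 \<le> top_eigenvalue F"
  using quad_le_top_eigenvalue_unit[OF l2_zero]
    pos_form_zero_right[OF trace_class_form_pos_form[OF tc] l2_zero]
  by (simp add: quad_def sqnorm_def)

lemma quad_le_top_eigenvalue: assumes "w \<in> l2" shows "quad F w \<le> top_eigenvalue F * sqnorm w"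
proof (cases "sqnorm w = 0")
  case True
  then show ?thesis using trace_class_form_bounded[OF tc assms] by simp
next
  case False
  then have pos: "sqnorm w > 0" using sqnorm_nonneg[of w] by simp
  define c where "c = complex_of_real (1 / sqrt (sqnorm w))"
  have c: "(cmod c)^2 = 1 / sqnorm w" using pos by (simp add: c_def norm_divide power_divide)
  have "quad F (\<lambda>a. c * w a) \<le> top_eigenvalue F"
    using pos c by (intro quad_le_top_eigenvalue_unit l2_scale assms) (simp add: sqnorm_scale assms)
  then have "quad F w / sqnorm w \<le> top_eigenvalue F"
    using quad_scale[OF trace_class_form_pos_form[OF tc] assms] c by simp
  then show ?thesis using pos by (simp add: field_simps)
qed

text \<open>A maximizing sequence has a pointwise convergent subsequence; by weak continuity of the
  quadratic form its limit is a maximizer.\<close>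
lemma top_eigenvalue_attained:
  assumes "top_eigenvalue F > 0"
  obtains v where "v \<in> l2" "sqnorm v = 1" "quad F v = top_eigenvalue F"
proof -
  define \<mu> where "\<mu> = top_eigenvalue F"
  have nonempty: "{quad F x | x. x \<in> l2 \<and> sqnorm x \<le> 1} \<noteq> {}"
    using l2_zero by (auto intro!: exI[of _ "\<lambda>_. 0"] simp: sqnorm_def)
  have "\<forall>k. \<exists>x. x \<in> l2 \<and> sqnorm x \<le> 1 \<and> \<mu> - 1 / (real k + 1) < quad F x"
  proof
    fix k
    have "\<mu> - 1 / (real k + 1) < \<mu>" by simp
    then show "\<exists>x. x \<in> l2 \<and> sqnorm x \<le> 1 \<and> \<mu> - 1 / (real k + 1) < quad F x"
      unfolding \<mu>_def top_eigenvalue_def less_cSup_iff[OF nonempty trace_class_form_unit_quad_bdd_above]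
      by blast
  qed
  then obtain x where x: "\<And>k. x k \<in> l2" "\<And>k. sqnorm (x k) \<le> 1"
    and x_max: "\<And>k. \<mu> - 1 / (real k + 1) < quad F (x k)"
    by metis
  have x_bounded: "cmod (x k a) \<le> 1" for k a
  proof (rule power2_le_imp_le)
    show "(cmod (x k a))^2 \<le> 1^2"
      using sqnorm_coordinate_le[OF x(1), of k a] x(2)[of k] by simp
  qed simp
  obtain r y where r: "strict_mono r" "\<And>a. (\<lambda>k. x (r k) a) \<longlonglongrightarrow> y a"
    using bounded_seq_pointwise_convergent_subseq[of x 1] x_bounded by blast
  have y: "y \<in> l2" "sqnorm y \<le> 1"
    using pointwise_limit_l2[where x="\<lambda>k. x (r k)", OF x(1) x(2) r(2)] by auto
  have "(\<lambda>k. quad F (x (r k))) \<longlonglongrightarrow> quad F y"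
    by (rule quad_tendsto_if_pointwise[OF tc x(1) x(2) y(1) r(2)])
  moreover have "(\<lambda>k. quad F (x (r k))) \<longlonglongrightarrow> \<mu>"
  proof (rule tendsto_sandwich[where f="\<lambda>k. \<mu> - 1 / (real (r k) + 1)" and h="\<lambda>_. \<mu>"])
    show "\<forall>\<^sub>F k in sequentially. \<mu> - 1 / (real (r k) + 1) \<le> quad F (x (r k))"
      by (intro always_eventually allI less_imp_le x_max)
    show "\<forall>\<^sub>F k in sequentially. quad F (x (r k)) \<le> \<mu>"
      unfolding \<mu>_def by (intro always_eventually allI quad_le_top_eigenvalue_unit x)
    have "(\<lambda>k. 1 / (real (r k) + 1)) \<longlonglongrightarrow> 0"
      using LIMSEQ_subseq_LIMSEQ[OF LIMSEQ_inverse_real_of_nat r(1)]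
      by (simp add: o_def inverse_eq_divide add.commute)
    from tendsto_diff[OF tendsto_const this]
    show "(\<lambda>k. \<mu> - 1 / (real (r k) + 1)) \<longlonglongrightarrow> \<mu>" by simp
  qed simp
  ultimately have quad_y: "quad F y = \<mu>" by (rule LIMSEQ_unique)
  then have "\<mu> \<le> \<mu> * sqnorm y" using quad_le_top_eigenvalue[OF y(1)] by (simp add: \<mu>_def)
  then have "sqnorm y = 1" using y(2) assms by (simp add: \<mu>_def)
  with that y(1) quad_y show ?thesis by (simp add: \<mu>_def)
qed

lemma eq_zero_if_le_quadratic:
  fixes a M :: real
  assumes "0 \<le> a" "\<And>t. t > 0 \<Longrightarrow> 2 * t * a \<le> t^2 * a * M"
  shows "a = 0"
proof -
  define t where "t = 1 / (\<bar>M\<bar> + 1)"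
  have t: "t > 0" by (simp add: t_def)
  have "t * M \<le> t * (\<bar>M\<bar> + 1)" using t by (intro mult_left_mono) auto
  then have tM: "t * M \<le> 1" by (simp add: t_def)
  have "t * (2 * a) \<le> t * ((t * M) * a)"
    using assms(2)[OF t] by (simp add: power2_eq_square mult_ac)
  then have "2 * a \<le> (t * M) * a" using t by simp
  also have "\<dots> \<le> a" using mult_right_mono[OF tM assms(1)] by simp
  finally show ?thesis using assms(1) by simp
qed

text \<open>First-order condition: perturbing the maximizer v to v + s y cannot increase the Rayleigh
  quotient.\<close>
lemma top_eigenvector_eigen:
  assumes v: "v \<in> l2" "sqnorm v = 1" "quad F v = top_eigenvalue F" and y: "y \<in> l2"
  shows "F y v = complex_of_real (top_eigenvalue F) * cinner y v"
proof -
  have F: "pos_form F" using tc by (rule trace_class_form_pos_form)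
  define \<mu> where "\<mu> = top_eigenvalue F"
  define e where "e = F y v - complex_of_real \<mu> * cinner y v"
  define M where "M = \<mu> * sqnorm y - quad F y"
  have e_cnj: "F v y - complex_of_real \<mu> * cinner v y = cnj e"
    unfolding e_def using pos_form_hermitian[OF F v(1) y] cinner_cnj[of v y] by simp
  have variation: "2 * Re (s * cnj e) \<le> (cmod s)^2 * M" for s
  proof -
    have le: "quad F (\<lambda>a. v a + s * y a) \<le> \<mu> * sqnorm (\<lambda>a. v a + s * y a)"
      unfolding \<mu>_def by (intro quad_le_top_eigenvalue l2_lincomb v y)
    have "quad F (\<lambda>a. v a + s * y a) = \<mu> + 2 * Re (s * F v y) + (cmod s)^2 * quad F y"
      using quad_lincomb[OF F v(1) y, of s] v(3) by (simp add: \<mu>_def)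
    moreover have "sqnorm (\<lambda>a. v a + s * y a) = 1 + 2 * Re (s * cinner v y) + (cmod s)^2 * sqnorm y"
      using quad_lincomb[OF pos_form_cinner v(1) y, of s] v(2)
      by (simp add: quad_cinner l2_lincomb v(1) y)
    ultimately have "\<mu> + 2 * Re (s * F v y) + (cmod s)^2 * quad F y
        \<le> \<mu> * (1 + 2 * Re (s * cinner v y) + (cmod s)^2 * sqnorm y)"
      using le by simp
    moreover have "\<mu> * (1 + 2 * Re (s * cinner v y) + (cmod s)^2 * sqnorm y)
        = \<mu> + 2 * \<mu> * Re (s * cinner v y) + (cmod s)^2 * (\<mu> * sqnorm y)"
      by (simp add: algebra_simps)
    ultimately have "2 * Re (s * F v y) - 2 * \<mu> * Re (s * cinner v y)
        \<le> (cmod s)^2 * (\<mu> * sqnorm y) - (cmod s)^2 * quad F y"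
      by linarith
    then have "2 * Re (s * F v y) - 2 * \<mu> * Re (s * cinner v y) \<le> (cmod s)^2 * M"
      by (simp add: M_def right_diff_distrib)
    moreover have "Re (s * cnj e) = Re (s * F v y) - \<mu> * Re (s * cinner v y)"
      unfolding e_cnj[symmetric] by (simp add: algebra_simps)
    ultimately show ?thesis by linarith
  qed
  have "(cmod e)^2 = 0"
  proof (rule eq_zero_if_le_quadratic)
    fix t :: real assume "t > 0"
    have "e * cnj e = complex_of_real ((cmod e)^2)" by (rule complex_norm_square[symmetric])
    then show "2 * t * (cmod e)^2 \<le> t^2 * (cmod e)^2 * M"
      using variation[of "complex_of_real t * e"] \<open>t > 0\<close>
      by (simp add: mult.assoc norm_mult power_mult_distrib)
  qed simp
  then show ?thesis by (simp add: e_def \<mu>_def)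
qed

end

section \<open>Deflation\<close>

definition deflate :: "(vec \<Rightarrow> vec \<Rightarrow> complex) \<Rightarrow> real \<Rightarrow> vec \<Rightarrow> vec \<Rightarrow> vec \<Rightarrow> complex" where
  "deflate F m v = (\<lambda>y x. F y x - complex_of_real m * (cinner y v * cinner v x))"

lemma quad_deflate: "quad (deflate F m v) x = quad F x - m * (cmod (cinner v x))^2"
proof -
  have "cinner x v * cinner v x = complex_of_real ((cmod (cinner v x))^2)"
    by (metis cinner_cnj complex_norm_square mult.commute)
  then show ?thesis by (simp add: quad_def deflate_def)
qed

lemma diag_deflate: "diag (deflate F m v) a = diag F a - m * (cmod (v a))^2"
proof -
  have "v a * cnj (v a) = complex_of_real ((cmod (v a))^2)" by (rule complex_norm_square[symmetric])
  then show ?thesis by (simp add: diag_def quad_def deflate_def cinner_basis_left cinner_basis_right)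
qed

context
  fixes F :: "vec \<Rightarrow> vec \<Rightarrow> complex" and K t :: real and v :: vec
  assumes tc: "trace_class_form F K t"
    and v: "v \<in> l2" "sqnorm v = 1" "quad F v = top_eigenvalue F"
begin

text \<open>Split x into its component along v and a part orthogonal to v; since v is an eigenvector, F
  does not couple the two parts.\<close>
lemma quad_deflate_top_eigenvector_nonneg:
  assumes x: "x \<in> l2"
  shows "0 \<le> quad (deflate F (top_eigenvalue F) v) x"
proof -
  have F: "pos_form F" using tc by (rule trace_class_form_pos_form)
  define c where "c = cinner v x"
  define x' where "x' = (\<lambda>a. x a + (- c) * v a)"
  have x': "x' \<in> l2" unfolding x'_def using x v(1) by (rule l2_lincomb)
  have "cinner x' v = cinner x v - cnj c * cinner v v"
    unfolding x'_def using cinner_lincomb_left[OF x v(1) v(1), of "- c"] by simp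
  then have "cinner x' v = 0"
    using cinner_self[OF v(1)] v(2) cinner_cnj[of x v] by (simp add: c_def)
  then have "F x' v = 0"
    using top_eigenvector_eigen[OF tc v x'] by simp
  moreover have "x = (\<lambda>a. x' a + c * v a)" by (simp add: x'_def)
  ultimately have "quad F x = quad F x' + (cmod c)^2 * top_eigenvalue F"
    using quad_lincomb[OF F x' v(1), of c] v(3) by simp
  then have "quad (deflate F (top_eigenvalue F) v) x = quad F x'"
    by (simp add: quad_deflate c_def)
  then show ?thesis using quad_nonneg[OF F x'] by simp
qed

lemma pos_form_deflate_top_eigenvector: "pos_form (deflate F (top_eigenvalue F) v)"
proof -
  have F: "pos_form F" using tc by (rule trace_class_form_pos_form)
  show ?thesis
    unfolding pos_form_def
  proof (intro conjI ballI allI)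
    fix x y z c assume xyz: "x \<in> l2" "y \<in> l2" "z \<in> l2"
    show "deflate F (top_eigenvalue F) v z (\<lambda>a. x a + c * y a)
      = deflate F (top_eigenvalue F) v z x + c * deflate F (top_eigenvalue F) v z y"
      unfolding deflate_def pos_form_lincomb_right[OF F xyz] cinner_lincomb_right[OF xyz(1,2) v(1)]
      by (simp add: algebra_simps)
  next
    fix x y assume "x \<in> l2" "y \<in> l2"
    then show "deflate F (top_eigenvalue F) v x y = cnj (deflate F (top_eigenvalue F) v y x)"
      unfolding deflate_def
      using pos_form_hermitian[OF F \<open>x \<in> l2\<close> \<open>y \<in> l2\<close>] cinner_cnj[of x v] cinner_cnj[of v y]
      by simp
  next
    fix x assume "x \<in> l2"
    then show "0 \<le> Re (deflate F (top_eigenvalue F) v x x)"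
      using quad_deflate_top_eigenvector_nonneg by (simp add: quad_def)
  qed
qed

lemma trace_class_form_deflate_top_eigenvector:
  "trace_class_form (deflate F (top_eigenvalue F) v) K (t - top_eigenvalue F)"
  unfolding trace_class_form_def
proof (intro conjI ballI)
  show "pos_form (deflate F (top_eigenvalue F) v)" by (rule pos_form_deflate_top_eigenvector)
next
  fix x assume "x \<in> l2"
  have "0 \<le> top_eigenvalue F * (cmod (cinner v x))^2" using top_eigenvalue_nonneg[OF tc] by simp
  then show "quad (deflate F (top_eigenvalue F) v) x \<le> K * sqnorm x"
    using trace_class_form_bounded[OF tc \<open>x \<in> l2\<close>] unfolding quad_deflate by linarith
next
  have "((\<lambda>a. diag F a + (- top_eigenvalue F) * (cmod (v a))^2)
      has_sum (t + (- top_eigenvalue F) * sqnorm v)) UNIV"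
    using tc sqnorm_summable[OF v(1)]
    by (intro has_sum_add has_sum_cmult_right) (auto simp: trace_class_form_def sqnorm_def)
  then show "(diag (deflate F (top_eigenvalue F) v) has_sum (t - top_eigenvalue F)) UNIV"
    using v(2) by (simp add: diag_deflate[abs_def])
qed

end

definition top_eigenvector :: "(vec \<Rightarrow> vec \<Rightarrow> complex) \<Rightarrow> vec" where
  "top_eigenvector F = (SOME v. v \<in> l2 \<and> sqnorm v = 1 \<and> quad F v = top_eigenvalue F)"

text \<open>Once the top eigenvalue is zero the form vanishes, and the step does nothing.\<close>
definition deflation_step :: "(vec \<Rightarrow> vec \<Rightarrow> complex) \<Rightarrow> vec \<Rightarrow> vec \<Rightarrow> complex" where
  "deflation_step F =
     (if top_eigenvalue F > 0 then deflate F (top_eigenvalue F) (top_eigenvector F) else F)"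

lemma top_eigenvector:
  assumes "trace_class_form F K t" "top_eigenvalue F > 0"
  shows "top_eigenvector F \<in> l2" "sqnorm (top_eigenvector F) = 1"
    "quad F (top_eigenvector F) = top_eigenvalue F"
proof -
  obtain v where "v \<in> l2" "sqnorm v = 1" "quad F v = top_eigenvalue F"
    using top_eigenvalue_attained[OF assms] .
  then have "\<exists>v. v \<in> l2 \<and> sqnorm v = 1 \<and> quad F v = top_eigenvalue F" by blast
  from someI_ex[OF this] show "top_eigenvector F \<in> l2" "sqnorm (top_eigenvector F) = 1"
    "quad F (top_eigenvector F) = top_eigenvalue F"
    unfolding top_eigenvector_def by auto
qed

lemma trace_class_form_deflation_step:
  assumes "trace_class_form F K t"
  shows "trace_class_form (deflation_step F) K (t - top_eigenvalue F)"
proof (cases "top_eigenvalue F > 0")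
  case True
  then show ?thesis
    using trace_class_form_deflate_top_eigenvector[OF assms top_eigenvector[OF assms True]]
    by (simp add: deflation_step_def)
next
  case False
  then have "top_eigenvalue F = 0" using top_eigenvalue_nonneg[OF assms] by simp
  with assms False show ?thesis by (simp add: deflation_step_def)
qed

section \<open>Spectral decomposition of trace-class forms\<close>

locale deflation_sequence =
  fixes F :: "vec \<Rightarrow> vec \<Rightarrow> complex" and K t :: real
  assumes trace_class: "trace_class_form F K t"
begin

definition residual :: "nat \<Rightarrow> vec \<Rightarrow> vec \<Rightarrow> complex" where
  "residual n = (deflation_step ^^ n) F"

definition eigval :: "nat \<Rightarrow> real" where
  "eigval n = top_eigenvalue (residual n)"

definition eigvec :: "nat \<Rightarrow> vec" where
  "eigvec n = top_eigenvector (residual n)"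

lemma residual_0: "residual 0 = F"
  by (simp add: residual_def)

lemma residual_Suc: "residual (Suc n) = deflation_step (residual n)"
  by (simp add: residual_def)

lemma trace_class_form_residual: "trace_class_form (residual n) K (t - (\<Sum>i<n. eigval i))"
proof (induction n)
  case 0
  then show ?case using trace_class by (simp add: residual_0)
next
  case (Suc n)
  from trace_class_form_deflation_step[OF Suc] show ?case
    by (simp add: residual_Suc eigval_def algebra_simps)
qed

lemma pos_form_residual: "pos_form (residual n)"
  using trace_class_form_residual by (rule trace_class_form_pos_form)

lemma eigval_nonneg: "0 \<le> eigval n"
  unfolding eigval_def by (rule top_eigenvalue_nonneg[OF trace_class_form_residual])

lemma eigvec:
  assumes "eigval n > 0"
  shows "eigvec n \<in> l2" "sqnorm (eigvec n) = 1" "quad (residual n) (eigvec n) = eigval n"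
  using top_eigenvector[OF trace_class_form_residual assms[unfolded eigval_def]]
  by (simp_all add: eigvec_def eigval_def)

lemma cinner_eigvec_self: "eigval n > 0 \<Longrightarrow> cinner (eigvec n) (eigvec n) = 1"
  using cinner_self[OF eigvec(1)] eigvec(2) by simp

lemma residual_eigvec:
  assumes "eigval n > 0" "y \<in> l2"
  shows "residual n y (eigvec n) = complex_of_real (eigval n) * cinner y (eigvec n)"
  using top_eigenvector_eigen[OF trace_class_form_residual eigvec(1,2)[OF assms(1)]
      eigvec(3)[OF assms(1), unfolded eigval_def] assms(2)]
  by (simp add: eigval_def)

lemma residual_Suc_apply:
  "residual (Suc n) y x = residual n y x - complex_of_real (eigval n) * (cinner y (eigvec n) * cinner (eigvec n) x)"
  using eigval_nonneg[of n]
  by (auto simp: residual_Suc deflation_step_def deflate_def eigval_def eigvec_def)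

lemma residual_apply:
  "residual n y x = F y x - (\<Sum>i<n. complex_of_real (eigval i) * (cinner y (eigvec i) * cinner (eigvec i) x))"
  by (induction n) (simp_all add: residual_0 residual_Suc_apply)

lemma sum_eigval_le: "(\<Sum>i<n. eigval i) \<le> t"
  using has_sum_nonneg[OF _ diag_nonneg[OF pos_form_residual]] trace_class_form_residual[of n]
  by (force simp: trace_class_form_def)

lemma summable_eigval: "summable eigval"
  using eigval_nonneg sum_eigval_le by (intro summableI_nonneg_bounded)

lemma residual_eigvec_later:
  assumes "eigval i > 0" "i < j" "y \<in> l2"
  shows "residual j y (eigvec i) = 0"
  using assms(2,3)
proof (induction j arbitrary: y)
  case 0
  then show ?case by simp
next
  case (Suc j)
  have step: "residual (Suc j) y (eigvec i) = residual j y (eigvec i)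
      - complex_of_real (eigval j) * (cinner y (eigvec j) * cinner (eigvec j) (eigvec i))"
    by (rule residual_Suc_apply)
  show ?case
  proof (cases "i = j")
    case True
    then show ?thesis
      using step residual_eigvec[OF assms(1) Suc.prems(2)] cinner_eigvec_self[OF assms(1)] by simp
  next
    case False
    then have "i < j" using Suc.prems by simp
    have "eigval j = 0 \<or> cinner (eigvec j) (eigvec i) = 0"
    proof (cases "eigval j > 0")
      case True
      have "complex_of_real (eigval j) * cinner (eigvec i) (eigvec j) = residual j (eigvec i) (eigvec j)"
        using residual_eigvec[OF True eigvec(1)[OF assms(1)]] by simp
      also have "\<dots> = cnj (residual j (eigvec j) (eigvec i))"
        by (rule pos_form_hermitian[OF pos_form_residual eigvec(1)[OF assms(1)] eigvec(1)[OF True]])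
      also have "residual j (eigvec j) (eigvec i) = 0"
        using Suc.IH[OF \<open>i < j\<close> eigvec(1)[OF True]] .
      finally have "cinner (eigvec i) (eigvec j) = 0" using True by simp
      then show ?thesis using cinner_cnj[of "eigvec j" "eigvec i"] by simp
    qed (use eigval_nonneg[of j] in simp)
    then show ?thesis using step Suc.IH[OF \<open>i < j\<close> Suc.prems(2)] by auto
  qed
qed

lemma orthonormal_eigvec: "orthonormal_on {i. eigval i > 0} eigvec"
proof -
  have orth: "cinner (eigvec i) (eigvec j) = 0" if "eigval i > 0" "eigval j > 0" "i < j" for i j
  proof -
    have "complex_of_real (eigval j) * cinner (eigvec i) (eigvec j) = residual j (eigvec i) (eigvec j)"
      using residual_eigvec[OF that(2) eigvec(1)[OF that(1)]] by simp
    also have "\<dots> = cnj (residual j (eigvec j) (eigvec i))"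
      by (rule pos_form_hermitian[OF pos_form_residual eigvec(1)[OF that(1)] eigvec(1)[OF that(2)]])
    also have "\<dots> = 0" using residual_eigvec_later[OF that(1,3) eigvec(1)[OF that(2)]] by simp
    finally show ?thesis using that(2) by simp
  qed
  show ?thesis
    unfolding orthonormal_on_def
  proof (intro conjI ballI)
    fix i j assume i: "i \<in> {i. eigval i > 0}" and j: "j \<in> {i. eigval i > 0}"
    show "cinner (eigvec i) (eigvec j) = (if i = j then 1 else 0)"
    proof (cases i j rule: linorder_cases)
      case greater
      then show ?thesis using orth[of j i] i j cinner_cnj[of "eigvec i" "eigvec j"] by simp
    qed (use orth cinner_eigvec_self i j in simp_all)
  qed (use eigvec in simp)
qed

lemma norm_residual_le:
  assumes "x \<in> l2" "y \<in> l2"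
  shows "cmod (residual n y x) \<le> eigval n * (l2norm y * l2norm x)"
proof -
  have seminorm_le: "seminorm (residual n) z \<le> sqrt (eigval n) * l2norm z" if "z \<in> l2" for z
    using quad_le_top_eigenvalue[OF trace_class_form_residual that]
    by (simp add: seminorm_def eigval_def l2norm_eq_sqrt_sqnorm real_sqrt_mult[symmetric])
  have "cmod (residual n y x) \<le> seminorm (residual n) y * seminorm (residual n) x"
    by (rule pos_form_Cauchy_Schwarz[OF pos_form_residual assms])
  also have "\<dots> \<le> (sqrt (eigval n) * l2norm y) * (sqrt (eigval n) * l2norm x)"
    using assms eigval_nonneg l2norm_nonneg
    by (intro mult_mono seminorm_le seminorm_nonneg[OF pos_form_residual]) auto
  also have "\<dots> = eigval n * (l2norm y * l2norm x)"
    using eigval_nonneg[of n] by (simp add: algebra_simps)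
  finally show ?thesis .
qed

lemma norm_eigen_term_le:
  assumes "x \<in> l2" "y \<in> l2"
  shows "cmod (complex_of_real (eigval i) * (cinner y (eigvec i) * cinner (eigvec i) x))
    \<le> eigval i * (l2norm y * l2norm x)"
proof (cases "eigval i > 0")
  case True
  have "l2norm (eigvec i) = 1" using eigvec(2)[OF True] by (simp add: l2norm_eq_sqrt_sqnorm)
  then have "cmod (cinner y (eigvec i)) * cmod (cinner (eigvec i) x) \<le> l2norm y * l2norm x"
    using cinner_Cauchy_Schwarz[OF eigvec(1)[OF True] assms(2)]
      cinner_Cauchy_Schwarz[OF assms(1) eigvec(1)[OF True]]
    by (intro mult_mono) (simp_all add: l2norm_nonneg)
  then show ?thesis using eigval_nonneg[of i] by (simp add: norm_mult mult_left_mono)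
next
  case False
  then show ?thesis using eigval_nonneg[of i] by (simp add: l2norm_nonneg)
qed

text \<open>The partial sums differ from F by the residual forms, whose norms eigval n tend to zero.\<close>
lemma eigen_expansion:
  assumes "x \<in> l2" "y \<in> l2"
  shows "F y x = (\<Sum>\<^sub>\<infinity>i\<in>{i. eigval i > 0}.
    complex_of_real (eigval i) * (cinner y (eigvec i) * cinner (eigvec i) x))"
proof -
  define g where "g = (\<lambda>i. complex_of_real (eigval i) * (cinner y (eigvec i) * cinner (eigvec i) x))"
  have "(\<lambda>i. eigval i * (l2norm y * l2norm x)) summable_on UNIV"
    by (intro summable_on_cmult_left summable_nonneg_imp_summable_on summable_eigval eigval_nonneg)
  then have "(\<lambda>i. norm (g i)) summable_on UNIV"
    by (rule summable_on_comparison_test) (use norm_eigen_term_le[OF assms] in \<open>auto simp: g_def\<close>)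
  then have "g summable_on UNIV" by (rule abs_summable_summable)
  then have "g sums infsum g UNIV" by (intro has_sum_imp_sums has_sum_infsum)
  moreover have "(\<lambda>n. \<Sum>i<n. g i) \<longlonglongrightarrow> F y x"
  proof -
    have "(\<lambda>n. eigval n * (l2norm y * l2norm x)) \<longlonglongrightarrow> 0"
      using tendsto_mult_left_zero[OF summable_LIMSEQ_zero[OF summable_eigval]] by simp
    then have "(\<lambda>n. residual n y x) \<longlonglongrightarrow> 0"
      by (rule Lim_null_comparison[rotated]) (use norm_residual_le[OF assms] in simp)
    from tendsto_diff[OF tendsto_const[of "F y x"] this] show ?thesis
      by (simp add: residual_apply g_def)
  qed
  ultimately have "infsum g UNIV = F y x" unfolding sums_def by (rule LIMSEQ_unique)
  moreover have "infsum g {i. eigval i > 0} = infsum g UNIV"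
    using eigval_nonneg by (intro infsum_cong_neutral) (auto simp: g_def less_le)
  ultimately show ?thesis by (simp add: g_def)
qed

lemma summable_on_eigval: "eigval summable_on {i. eigval i > 0}"
  using summable_on_subset_banach[OF summable_nonneg_imp_summable_on[OF summable_eigval eigval_nonneg]]
  by blast

lemma diag_residual_le: "diag (residual n) a \<le> diag F a"
proof -
  have "cinner (basis a) (eigvec i) * cinner (eigvec i) (basis a) = complex_of_real ((cmod (eigvec i a))^2)" for i
    unfolding cinner_basis_left cinner_basis_right by (rule complex_norm_square[symmetric])
  then have "diag (residual n) a = diag F a - (\<Sum>i<n. eigval i * (cmod (eigvec i a))^2)"
    unfolding diag_def quad_def residual_apply by (simp add: Re_sum)
  moreover have "0 \<le> (\<Sum>i<n. eigval i * (cmod (eigvec i a))^2)"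
    by (intro sum_nonneg mult_nonneg_nonneg eigval_nonneg) simp
  ultimately show ?thesis by linarith
qed

text \<open>Deflation only decreases the diagonal, so the residual form vanishes on basis a, and by
  Cauchy-Schwarz it does not couple basis a to its own eigenvector.\<close>
lemma eigvec_vanishes:
  assumes "eigval i > 0" "diag F a = 0"
  shows "eigvec i a = 0"
proof -
  have "diag (residual i) a = 0"
    using diag_residual_le[of i a] diag_nonneg[OF pos_form_residual, of i a] assms(2) by simp
  then have "seminorm (residual i) (basis a) = 0" by (simp add: seminorm_def diag_def)
  then have "residual i (basis a) (eigvec i) = 0"
    using pos_form_Cauchy_Schwarz[OF pos_form_residual eigvec(1)[OF assms(1)] l2_basis, of i a] by simp
  then show ?thesis using residual_eigvec[OF assms(1) l2_basis] assms(1) by (simp add: cinner_basis_left)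
qed

end

theorem trace_class_form_spectral_decomposition:
  assumes "trace_class_form F K t"
  obtains I \<Psi> lam where "orthonormal_on I \<Psi>" "\<And>i a. i \<in> I \<Longrightarrow> diag F a = 0 \<Longrightarrow> \<Psi> i a = 0"
    "lam summable_on I" "\<And>i. i \<in> I \<Longrightarrow> lam i > 0"
    "\<And>x y. x \<in> l2 \<Longrightarrow> y \<in> l2 \<Longrightarrow>
       F y x = (\<Sum>\<^sub>\<infinity>i\<in>I. complex_of_real (lam i) * (cinner y (\<Psi> i) * cinner (\<Psi> i) x))"
proof -
  interpret deflation_sequence F K t using assms by unfold_locales
  show ?thesis
    using that[OF orthonormal_eigvec _ summable_on_eigval _ eigen_expansion] eigvec_vanishes by blast
qed

section \<open>Normal states\<close>

definition op_form :: "(vec \<Rightarrow> vec) \<Rightarrow> vec \<Rightarrow> vec \<Rightarrow> complex" where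
  "op_form T = (\<lambda>y x. cinner y (T x))"

lemma diag_op_form: "diag (op_form T) a = Re (cinner (basis a) (T (basis a)))"
  by (simp add: diag_def quad_def op_form_def)

lemma pos_form_op_form:
  assumes "bounded_op T" "positive_op T"
  shows "pos_form (op_form T)"
proof -
  have T: "T x \<in> l2" "T (\<lambda>a. x a + c * y a) = (\<lambda>a. T x a + c * T y a)" if "x \<in> l2" "y \<in> l2" for x y c
    using assms(1) that by (auto simp: bounded_op_def)
  have lin_right: "op_form T z (\<lambda>a. x a + c * y a) = op_form T z x + c * op_form T z y"
    if "x \<in> l2" "y \<in> l2" "z \<in> l2" for x y z c
    using that T by (simp add: op_form_def cinner_lincomb_right)
  have lin_left: "op_form T (\<lambda>a. x a + c * y a) z = op_form T x z + cnj c * op_form T y z"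
    if "x \<in> l2" "y \<in> l2" "z \<in> l2" for x y z c
    using that T by (simp add: op_form_def cinner_lincomb_left)
  have real: "Im (op_form T u u) = 0" if "u \<in> l2" for u
    using assms(2) that by (auto simp: positive_op_def op_form_def complex_is_Real_iff)
  show ?thesis
    unfolding pos_form_def
  proof (intro conjI ballI allI)
    show "op_form T x y = cnj (op_form T y x)" if "x \<in> l2" "y \<in> l2" for x y
      by (rule hermitian_if_real_diagonal[OF lin_right lin_left real that])
    show "0 \<le> Re (op_form T x x)" if "x \<in> l2" for x
      using assms(2) that by (simp add: positive_op_def op_form_def)
  qed (use lin_right in simp)
qed

lemma trace_class_form_op_form:
  assumes "normal_state T"
  obtains K where "trace_class_form (op_form T) K 1"
proof -
  have bounded: "bounded_op T" and pos: "positive_op T"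
    and trace: "((\<lambda>a. Re (cinner (basis a) (T (basis a)))) has_sum 1) UNIV"
    using assms by (auto simp: normal_state_def)
  obtain K where K: "\<And>x. x \<in> l2 \<Longrightarrow> l2norm (T x) \<le> K * l2norm x" "\<And>x. x \<in> l2 \<Longrightarrow> T x \<in> l2"
    using bounded unfolding bounded_op_def by blast
  have "quad (op_form T) x \<le> K * sqnorm x" if "x \<in> l2" for x
  proof -
    have "quad (op_form T) x \<le> cmod (cinner x (T x))"
      unfolding quad_def op_form_def by (rule complex_Re_le_cmod)
    also have "\<dots> \<le> l2norm x * l2norm (T x)" by (rule cinner_Cauchy_Schwarz[OF K(2)[OF that] that])
    also have "\<dots> \<le> l2norm x * (K * l2norm x)" by (rule mult_left_mono[OF K(1)[OF that] l2norm_nonneg])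
    also have "\<dots> = K * sqnorm x" by (simp add: l2norm_eq_sqrt_sqnorm sqnorm_nonneg)
    finally show ?thesis .
  qed
  then have "trace_class_form (op_form T) K 1"
    using pos_form_op_form[OF bounded pos] trace
    by (simp add: trace_class_form_def diag_op_form[abs_def])
  then show ?thesis by (rule that)
qed

section \<open>Moments of the number operator\<close>

lemma normal_state_diag_nonneg: "normal_state \<rho> \<Longrightarrow> 0 \<le> Re (cinner (basis a) (\<rho> (basis a)))"
  by (simp add: normal_state_def positive_op_def)

lemma ennreal_has_sum:
  fixes g :: "'a \<Rightarrow> real"
  assumes "(g has_sum s) UNIV" "\<And>a. 0 \<le> g a"
  shows "((\<lambda>a. ennreal (g a)) has_sum ennreal s) UNIV"
proof -
  have "((ennreal \<circ> g) has_sum ennreal s) UNIV"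
  proof (rule has_sum_comm_additive_general[OF _ _ assms(1)])
    show "sum (ennreal \<circ> g) G = ennreal (sum g G)" for G
      using sum_ennreal[of G g] assms(2) by (simp add: o_def)
    show "ennreal \<midarrow>s\<rightarrow> ennreal s" by (intro tendsto_ennrealI tendsto_ident_at)
  qed
  then show ?thesis by (simp add: o_def)
qed

context
  fixes \<epsilon> C :: real and \<rho> :: "vec \<Rightarrow> vec"
  assumes \<epsilon>: "\<epsilon> > 0" and C: "C > 0" and state: "normal_state \<rho>"
begin

lemma moment_le_pow_if_diag_vanishes:
  assumes vanish: "\<And>a. fst a > nat \<lfloor>C / \<epsilon>\<rfloor> \<Longrightarrow> Re (cinner (basis a) (\<rho> (basis a))) = 0"
  shows "moment \<epsilon> \<rho> k \<le> ennreal (C ^ k)"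
proof -
  define d where "d a = Re (cinner (basis a) (\<rho> (basis a)))" for a
  have d: "0 \<le> d a" for a unfolding d_def by (rule normal_state_diag_nonneg[OF state])
  have weight_le: "(\<epsilon> * real (fst a))^k * d a \<le> C^k * d a" for a
  proof (cases "fst a > nat \<lfloor>C / \<epsilon>\<rfloor>")
    case True
    then show ?thesis using vanish by (simp add: d_def)
  next
    case False
    then have "real (fst a) \<le> real (nat \<lfloor>C / \<epsilon>\<rfloor>)" by simp
    also have "\<dots> \<le> C / \<epsilon>" using C \<epsilon> by simp
    finally have "real (fst a) \<le> C / \<epsilon>" .
    then have "\<epsilon> * real (fst a) \<le> C" using \<epsilon> by (simp add: field_simps)
    then show ?thesis using \<epsilon> d[of a] by (intro mult_right_mono power_mono) auto
  qed
  have "moment \<epsilon> \<rho> k = (\<Sum>\<^sub>\<infinity>a. ennreal ((\<epsilon> * real (fst a))^k * d a))"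
    by (simp add: moment_def d_def)
  also have "\<dots> \<le> (\<Sum>\<^sub>\<infinity>a. ennreal (C^k * d a))"
    by (intro infsum_mono nonneg_summable_on_complete ennreal_leI weight_le) simp_all
  also have "\<dots> = ennreal (C^k * 1)"
  proof (rule infsumI, rule ennreal_has_sum)
    show "((\<lambda>a. C^k * d a) has_sum C^k * 1) UNIV"
      using state by (intro has_sum_cmult_right) (simp add: normal_state_def d_def[abs_def])
  qed (use C d in simp)
  finally show ?thesis by simp
qed

text \<open>A positive diagonal entry at a contributes (\<epsilon> * fst a)^k times that entry to the k-th moment,
  and \<epsilon> * fst a > C.\<close>
lemma diag_vanishes_if_moment_le_pow:
  assumes moments: "\<And>k. moment \<epsilon> \<rho> k \<le> ennreal (C ^ k)" and a: "fst a > nat \<lfloor>C / \<epsilon>\<rfloor>"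
  shows "Re (cinner (basis a) (\<rho> (basis a))) = 0"
proof (rule ccontr)
  define d where "d = Re (cinner (basis a) (\<rho> (basis a)))"
  define q where "q = \<epsilon> * real (fst a) / C"
  assume "Re (cinner (basis a) (\<rho> (basis a))) \<noteq> 0"
  then have d: "d > 0" using normal_state_diag_nonneg[OF state, of a] by (simp add: d_def)
  have "C / \<epsilon> < real (nat \<lfloor>C / \<epsilon>\<rfloor>) + 1" using C \<epsilon> by linarith
  also have "\<dots> \<le> real (fst a)" using a by simp
  finally have "C / \<epsilon> < real (fst a)" .
  then have "q > 1" using C \<epsilon> by (simp add: q_def field_simps)
  then obtain k where k: "1 / d < q^k" using real_arch_pow by blast
  have "ennreal ((\<epsilon> * real (fst a))^k * d) \<le> moment \<epsilon> \<rho> k"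
  proof -
    have "(\<Sum>\<^sub>\<infinity>b\<in>{a}. ennreal ((\<epsilon> * real (fst b))^k * Re (cinner (basis b) (\<rho> (basis b)))))
        \<le> (\<Sum>\<^sub>\<infinity>b. ennreal ((\<epsilon> * real (fst b))^k * Re (cinner (basis b) (\<rho> (basis b)))))"
      by (rule infsum_mono_neutral[OF nonneg_summable_on_complete nonneg_summable_on_complete]) auto
    then show ?thesis by (simp add: moment_def d_def)
  qed
  also have "\<dots> \<le> ennreal (C^k)" by (rule moments)
  finally have "(\<epsilon> * real (fst a))^k * d \<le> C^k" using C by (simp add: ennreal_le_iff)
  moreover have "(\<epsilon> * real (fst a))^k * d = C^k * (q^k * d)"
    using C by (simp add: q_def power_divide field_simps)
  moreover have "1 < q^k * d" using k d by (simp add: field_simps)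
  ultimately show False using C by simp
qed

lemma moment_le_pow_iff_diag_vanishes:
  "(\<forall>k. moment \<epsilon> \<rho> k \<le> ennreal (C ^ k)) \<longleftrightarrow>
   (\<forall>a. fst a > nat \<lfloor>C / \<epsilon>\<rfloor> \<longrightarrow> Re (cinner (basis a) (\<rho> (basis a))) = 0)"
  using moment_le_pow_if_diag_vanishes diag_vanishes_if_moment_le_pow by blast

end

section \<open>States supported in finitely many sectors\<close>

text \<open>rho = sum of lam i |Psi i><Psi i| with Psi i supported in H_0 + ... + H_N, the operator
  identity being stated through matrix elements.\<close>
definition sector_decomposition ::
    "nat \<Rightarrow> (vec \<Rightarrow> vec) \<Rightarrow> nat set \<Rightarrow> (nat \<Rightarrow> vec) \<Rightarrow> (nat \<Rightarrow> real) \<Rightarrow> bool" where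
  "sector_decomposition N \<rho> I \<Psi> lam \<longleftrightarrow>
     orthonormal_on I \<Psi> \<and>
     (\<forall>i\<in>I. \<forall>n m. n > N \<longrightarrow> \<Psi> i (n, m) = 0) \<and>
     lam summable_on I \<and> (\<forall>i\<in>I. lam i > 0) \<and>
     (\<forall>x\<in>l2. \<forall>y\<in>l2. cinner y (\<rho> x) =
        (\<Sum>\<^sub>\<infinity>i\<in>I. complex_of_real (lam i) * (cinner y (\<Psi> i) * cinner (\<Psi> i) x)))"

lemma sector_decomposition_if_diag_vanishes:
  assumes "normal_state \<rho>" "\<And>a. fst a > N \<Longrightarrow> Re (cinner (basis a) (\<rho> (basis a))) = 0"
  shows "\<exists>I \<Psi> lam. sector_decomposition N \<rho> I \<Psi> lam"
proof -
  obtain K where tc: "trace_class_form (op_form \<rho>) K 1"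
    using trace_class_form_op_form[OF assms(1)] .
  obtain I \<Psi> lam where decomp: "orthonormal_on I \<Psi>"
    "\<And>i a. i \<in> I \<Longrightarrow> diag (op_form \<rho>) a = 0 \<Longrightarrow> \<Psi> i a = 0"
    "lam summable_on I" "\<And>i. i \<in> I \<Longrightarrow> lam i > 0"
    "\<And>x y. x \<in> l2 \<Longrightarrow> y \<in> l2 \<Longrightarrow> op_form \<rho> y x =
       (\<Sum>\<^sub>\<infinity>i\<in>I. complex_of_real (lam i) * (cinner y (\<Psi> i) * cinner (\<Psi> i) x))"
    using trace_class_form_spectral_decomposition[OF tc] by blast
  have "\<Psi> i (n, m) = 0" if "i \<in> I" "n > N" for i n m
    using decomp(2)[OF that(1)] assms(2)[of "(n, m)"] that(2) by (simp add: diag_op_form)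
  with decomp show ?thesis
    unfolding sector_decomposition_def op_form_def by blast
qed

lemma diag_vanishes_if_sector_decomposition:
  assumes "sector_decomposition N \<rho> I \<Psi> lam" "fst a > N"
  shows "Re (cinner (basis a) (\<rho> (basis a))) = 0"
proof -
  obtain n m where a: "a = (n, m)" by (cases a)
  have "cinner (basis a) (\<rho> (basis a))
      = (\<Sum>\<^sub>\<infinity>i\<in>I. complex_of_real (lam i) * (cinner (basis a) (\<Psi> i) * cinner (\<Psi> i) (basis a)))"
    using assms(1) by (simp add: sector_decomposition_def)
  also have "\<dots> = 0"
    using assms a by (intro infsum_0) (simp add: sector_decomposition_def cinner_basis_left cinner_basis_right)
  finally show ?thesis by simp
qed

theorem lemma10:
  fixes \<rho> :: "real \<Rightarrow> vec \<Rightarrow> vec" and \<epsilon>bar C :: real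
  assumes "\<forall>\<epsilon>\<in>{0<..<\<epsilon>bar}. normal_state (\<rho> \<epsilon>)"
    and "C > 0"
  shows "(\<forall>\<epsilon>\<in>{0<..<\<epsilon>bar}. \<forall>k::nat. moment \<epsilon> (\<rho> \<epsilon>) k \<le> ennreal (C ^ k)) \<longleftrightarrow>
    (\<forall>\<epsilon>\<in>{0<..<\<epsilon>bar}. \<exists>I::nat set. \<exists>\<Psi>::nat \<Rightarrow> vec. \<exists>lam::nat \<Rightarrow> real.
        orthonormal_on I \<Psi> \<and>
        (\<forall>i\<in>I. \<forall>n m. n > nat \<lfloor>C / \<epsilon>\<rfloor> \<longrightarrow> \<Psi> i (n, m) = 0) \<and>
        lam summable_on I \<and> (\<forall>i\<in>I. lam i > 0) \<and>
        (\<forall>x\<in>l2. \<forall>y\<in>l2. cinner y (\<rho> \<epsilon> x) =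
            (\<Sum>\<^sub>\<infinity>i\<in>I. complex_of_real (lam i) * (cinner y (\<Psi> i) * cinner (\<Psi> i) x))))"
proof -
  have "(\<forall>k. moment \<epsilon> (\<rho> \<epsilon>) k \<le> ennreal (C ^ k)) \<longleftrightarrow>
      (\<exists>I \<Psi> lam. sector_decomposition (nat \<lfloor>C / \<epsilon>\<rfloor>) (\<rho> \<epsilon>) I \<Psi> lam)"
    if "\<epsilon> \<in> {0<..<\<epsilon>bar}" for \<epsilon>
  proof -
    have "\<epsilon> > 0" "normal_state (\<rho> \<epsilon>)" using that assms(1) by auto
    then show ?thesis
      using moment_le_pow_iff_diag_vanishes[OF _ assms(2)] sector_decomposition_if_diag_vanishes
        diag_vanishes_if_sector_decomposition by meson
  qed
  then have "(\<forall>\<epsilon>\<in>{0<..<\<epsilon>bar}. \<forall>k. moment \<epsilon> (\<rho> \<epsilon>) k \<le> ennreal (C ^ k)) \<longleftrightarrow>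
      (\<forall>\<epsilon>\<in>{0<..<\<epsilon>bar}. \<exists>I \<Psi> lam. sector_decomposition (nat \<lfloor>C / \<epsilon>\<rfloor>) (\<rho> \<epsilon>) I \<Psi> lam)"
    by (rule ball_cong[OF refl])
  then show ?thesis by (simp only: sector_decomposition_def)
qed

end
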